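(* Let $f_1,f_2\in S_3$ be linearly independent. Then $\dim\big(\pi_{1,2}P_\xi([f_1,f_2])\big)=2$ for almost every $\xi\in\mathbb{R}^2$.
   Context: For $j\ge0$, $S_j$ is the real vector space of homogeneous polynomials of degree $j$ in the variables $r,s$ (so $S_0=[1]$, $S_1=[r,s]$, $S_2=[r^2,rs,s^2]$, $S_3=[r^3,r^2s,rs^2,s^3]$); $[\cdot]$ denotes linear span. For $\xi=(a,b)\in\mathbb{R}^2$ and a polynomial $f$, $P_\xi f$ is the second-order Taylor polynomial of $f$ at $\xi$: $P_\xi f(r,s)=f(\xi)+\partial_rf(\xi)(r-a)+\partial_sf(\xi)(s-b)+\frac12\partial_{rr}f(\xi)(r-a)^2+\partial_{rs}f(\xi)(r-a)(s-b)+\frac12\partial_{ss}f(\xi)(s-b)^2\in S_0\oplus S_1\oplus S_2$. $\pi_{1,2}$ is the projection of $S_0\oplus S_1\oplus S_2$ onto $S_1\oplus S_2$ along $S_0$. *)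

theory Defs
  imports "HOL-Analysis.Analysis" "HOL-Library.Function_Algebras"
begin

text \<open>Polynomials in the variables r, s are represented as real functions on pairs (r,s).\<close>

type_synonym rfun = "real \<times> real \<Rightarrow> real"

definition fscale :: "real \<Rightarrow> rfun \<Rightarrow> rfun" where
  "fscale c f = (\<lambda>x. c * f x)"

definition S3 :: "rfun set" where
  "S3 = {(\<lambda>(r,s). a * r^3 + b * r^2 * s + c * r * s^2 + d * s^3) | a b c d. True}"

definition d_r :: "rfun \<Rightarrow> rfun" where
  "d_r f = (\<lambda>(a,b). deriv (\<lambda>r. f (r,b)) a)"
definition d_s :: "rfun \<Rightarrow> rfun" where
  "d_s f = (\<lambda>(a,b). deriv (\<lambda>s. f (a,s)) b)"

definition taylor2 :: "real \<times> real \<Rightarrow> rfun \<Rightarrow> rfun" where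
  "taylor2 xi f = (case xi of (a,b) \<Rightarrow> (\<lambda>(r,s).
      f (a,b) + d_r f (a,b) * (r - a) + d_s f (a,b) * (s - b)
      + 1/2 * d_r (d_r f) (a,b) * (r - a)^2
      + d_s (d_r f) (a,b) * (r - a) * (s - b)
      + 1/2 * d_s (d_s f) (a,b) * (s - b)^2))"

text \<open>Projection of S_0 + S_1 + S_2 onto S_1 + S_2 along S_0: removes the constant
  term, which for such a polynomial g is g(0,0).\<close>
definition pi12 :: "rfun \<Rightarrow> rfun" where
  "pi12 g = (\<lambda>x. g x - g (0,0))"

end

theory Submission imports Defs "HOL-Computational_Algebra.Polynomial" begin

text \<open>For a cubic f with coefficients (A,B,C,D), removing the constant term of the
  second-order Taylor polynomial at \<xi> = (a,b) leaves a polynomial whose quadratic part is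
  given by half the Hessian of f at \<xi>, with entries 3Aa + Bb, Ba + Cb, Ca + 3Db. A linear
  relation between the images of f1, f2 therefore forces the two half Hessians to be
  parallel, i.e. all three 2\<times>2 minors vanish. Each minor is a binary quadratic form in \<xi>
  whose coefficients are combinations of the Pluecker coordinates of (f1, f2); these do not
  all vanish because f1, f2 are independent, and a nonzero binary quadratic form vanishes
  only on finitely many lines.\<close>

interpretation fv: vector_space fscale
  by unfold_locales (auto simp: fscale_def algebra_simps fun_eq_iff)

context vector_space
begin

lemma span_pair: "span {x, y} = {scale a x + scale b y | a b. True}"
proof -
  have "z \<in> span {x, y} \<longleftrightarrow> (\<exists>a b. z - scale a x = scale b y)" for z
    by (auto simp: span_breakdown_eq span_singleton)
  then show ?thesis by (auto simp: diff_eq_eq add.commute)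
qed

lemma dim_span_pair:
  assumes indep: "\<And>a b. scale a x + scale b y = 0 \<Longrightarrow> a = 0 \<and> b = 0"
  shows "dim (span {x, y}) = 2"
proof -
  have "x \<noteq> y" using indep[of 1 "-1"] by auto
  moreover have "y \<noteq> 0" using indep[of 0 1] by auto
  moreover have "x \<notin> span {y}"
  proof
    assume "x \<in> span {y}"
    then obtain k where "x = scale k y" by (auto simp: span_singleton)
    then show False using indep[of 1 "-k"] by simp
  qed
  ultimately have "independent {x, y}" by (simp add: independent_insert)
  with \<open>x \<noteq> y\<close> show ?thesis using dim_span_eq_card_independent by fastforce
qed

end

definition cubic :: "real \<Rightarrow> real \<Rightarrow> real \<Rightarrow> real \<Rightarrow> rfun" where
  "cubic A B C D = (\<lambda>(r,s). A * r^3 + B * r^2 * s + C * r * s^2 + D * s^3)"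

lemma S3_eq_cubics: "S3 = {cubic A B C D | A B C D. True}"
  by (simp add: S3_def cubic_def)

lemma fscale_add_cubic:
  "fscale k1 (cubic A1 B1 C1 D1) + fscale k2 (cubic A2 B2 C2 D2) =
   cubic (k1*A1 + k2*A2) (k1*B1 + k2*B2) (k1*C1 + k2*C2) (k1*D1 + k2*D2)"
  by (auto simp: fscale_def cubic_def fun_eq_iff algebra_simps)

lemma d_r_eqI:
  assumes "\<And>a b. ((\<lambda>r. f (r,b)) has_real_derivative g (a,b)) (at a)"
  shows "d_r f = g"
  using assms by (auto simp: d_r_def fun_eq_iff intro!: DERIV_imp_deriv)

lemma d_s_eqI:
  assumes "\<And>a b. ((\<lambda>s. f (a,s)) has_real_derivative g (a,b)) (at b)"
  shows "d_s f = g"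
  using assms by (auto simp: d_s_def fun_eq_iff intro!: DERIV_imp_deriv)

lemma d_r_cubic: "d_r (cubic A B C D) = (\<lambda>(a,b). 3*A*a^2 + 2*B*a*b + C*b^2)"
  by (rule d_r_eqI) (auto simp: cubic_def power2_eq_square algebra_simps intro!: derivative_eq_intros)

lemma d_s_cubic: "d_s (cubic A B C D) = (\<lambda>(a,b). B*a^2 + 2*C*a*b + 3*D*b^2)"
  by (rule d_s_eqI) (auto simp: cubic_def power2_eq_square algebra_simps intro!: derivative_eq_intros)

lemma d_r_d_r_cubic: "d_r (d_r (cubic A B C D)) = (\<lambda>(a,b). 6*A*a + 2*B*b)"
  unfolding d_r_cubic
  by (rule d_r_eqI) (auto simp: power2_eq_square algebra_simps intro!: derivative_eq_intros)

lemma d_s_d_r_cubic: "d_s (d_r (cubic A B C D)) = (\<lambda>(a,b). 2*B*a + 2*C*b)"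
  unfolding d_r_cubic
  by (rule d_s_eqI) (auto simp: power2_eq_square algebra_simps intro!: derivative_eq_intros)

lemma d_s_d_s_cubic: "d_s (d_s (cubic A B C D)) = (\<lambda>(a,b). 2*C*a + 6*D*b)"
  unfolding d_s_cubic
  by (rule d_s_eqI) (auto simp: power2_eq_square algebra_simps intro!: derivative_eq_intros)

definition half_hessian :: "real \<Rightarrow> real \<Rightarrow> real \<Rightarrow> real \<Rightarrow> real \<times> real \<Rightarrow> real \<times> real \<times> real" where
  "half_hessian A B C D = (\<lambda>(a,b). (3*A*a + B*b, B*a + C*b, C*a + 3*D*b))"

lemma pi12_taylor2_cubic:
  "pi12 (taylor2 (a,b) (cubic A B C D)) = (\<lambda>(r,s).
     - (3*A*a^2 + 2*B*a*b + C*b^2) * r - (B*a^2 + 2*C*a*b + 3*D*b^2) * s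
     + (3*A*a + B*b) * r^2 + 2 * (B*a + C*b) * r * s + (C*a + 3*D*b) * s^2)"
  unfolding pi12_def taylor2_def d_r_d_r_cubic d_s_d_r_cubic d_s_d_s_cubic
  unfolding d_r_cubic d_s_cubic
  by (auto simp: fun_eq_iff cubic_def algebra_simps power2_eq_square)

lemma fscale_add_pi12_taylor2_cubic:
  "fscale k1 (pi12 (taylor2 \<xi> (cubic A1 B1 C1 D1))) + fscale k2 (pi12 (taylor2 \<xi> (cubic A2 B2 C2 D2)))
   = pi12 (taylor2 \<xi> (cubic (k1*A1 + k2*A2) (k1*B1 + k2*B2) (k1*C1 + k2*C2) (k1*D1 + k2*D2)))"
  by (cases \<xi>) (auto simp: pi12_taylor2_cubic fscale_def fun_eq_iff algebra_simps power2_eq_square)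

lemma half_hessian_eq_0_if_pi12_taylor2_eq_0:
  assumes "pi12 (taylor2 \<xi> (cubic A B C D)) = 0"
  shows "half_hessian A B C D \<xi> = 0"
proof -
  obtain a b where \<xi>: "\<xi> = (a,b)" by (cases \<xi>)
  note e = fun_cong[OF assms[unfolded \<xi> pi12_taylor2_cubic], simplified]
  \<comment> \<open>the values at (\<plusminus>1,0), (0,\<plusminus>1), \<plusminus>(1,1) isolate the three quadratic coefficients\<close>
  have "3*A*a + B*b = 0"
    using e[of "(1,0)"] e[of "(-1,0)"] by (simp add: algebra_simps power2_eq_square)
  moreover have "C*a + 3*D*b = 0"
    using e[of "(0,1)"] e[of "(0,-1)"] by (simp add: algebra_simps power2_eq_square)
  moreover have "B*a + C*b = 0"
    using e[of "(1,0)"] e[of "(-1,0)"] e[of "(0,1)"] e[of "(0,-1)"] e[of "(1,1)"] e[of "(-1,-1)"]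
    by (simp add: algebra_simps power2_eq_square)
  ultimately show ?thesis by (simp add: \<xi> half_hessian_def zero_prod_def)
qed

lemma half_hessian_add:
  "half_hessian (k1*A1 + k2*A2) (k1*B1 + k2*B2) (k1*C1 + k2*C2) (k1*D1 + k2*D2) \<xi>
   = k1 *\<^sub>R half_hessian A1 B1 C1 D1 \<xi> + k2 *\<^sub>R half_hessian A2 B2 C2 D2 \<xi>"
  by (cases \<xi>) (simp add: half_hessian_def algebra_simps)

fun wedge3 :: "real \<times> real \<times> real \<Rightarrow> real \<times> real \<times> real \<Rightarrow> real \<times> real \<times> real" where
  "wedge3 (u1,u2,u3) (v1,v2,v3) = (u1 * v2 - u2 * v1, u1 * v3 - u3 * v1, u2 * v3 - u3 * v2)"

lemma scaleR_add_eq_0_if_wedge3_nonzero: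
  assumes "wedge3 u v \<noteq> 0" and "k1 *\<^sub>R u + k2 *\<^sub>R v = 0"
  shows "k1 = 0 \<and> k2 = 0"
proof -
  obtain u1 u2 u3 v1 v2 v3 where uv: "u = (u1,u2,u3)" "v = (v1,v2,v3)" by (cases u, cases v) auto
  have e: "k1 * u1 + k2 * v1 = 0" "k1 * u2 + k2 * v2 = 0" "k1 * u3 + k2 * v3 = 0"
    using assms(2) by (simp_all add: uv zero_prod_def)
  \<comment> \<open>Cramer's rule: each coefficient times each minor lies in the span of the relations\<close>
  have "k1 * (u1 * v2 - u2 * v1) = v2 * (k1 * u1 + k2 * v1) - v1 * (k1 * u2 + k2 * v2)"
    and "k2 * (u1 * v2 - u2 * v1) = u1 * (k1 * u2 + k2 * v2) - u2 * (k1 * u1 + k2 * v1)"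
    and "k1 * (u1 * v3 - u3 * v1) = v3 * (k1 * u1 + k2 * v1) - v1 * (k1 * u3 + k2 * v3)"
    and "k2 * (u1 * v3 - u3 * v1) = u1 * (k1 * u3 + k2 * v3) - u3 * (k1 * u1 + k2 * v1)"
    and "k1 * (u2 * v3 - u3 * v2) = v3 * (k1 * u2 + k2 * v2) - v2 * (k1 * u3 + k2 * v3)"
    and "k2 * (u2 * v3 - u3 * v2) = u2 * (k1 * u3 + k2 * v3) - u3 * (k1 * u2 + k2 * v2)"
    by (simp_all add: algebra_simps)
  with e assms(1) show ?thesis by (auto simp: uv zero_prod_def)
qed

lemma dim_image_span_cubics:
  assumes "wedge3 (half_hessian A1 B1 C1 D1 \<xi>) (half_hessian A2 B2 C2 D2 \<xi>) \<noteq> 0"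
  shows "fv.dim ((\<lambda>f. pi12 (taylor2 \<xi> f)) ` fv.span {cubic A1 B1 C1 D1, cubic A2 B2 C2 D2}) = 2"
proof -
  let ?T = "\<lambda>f. pi12 (taylor2 \<xi> f)"
  have "?T ` fv.span {cubic A1 B1 C1 D1, cubic A2 B2 C2 D2}
      = fv.span {?T (cubic A1 B1 C1 D1), ?T (cubic A2 B2 C2 D2)}"
    unfolding fv.span_pair by (auto simp: fscale_add_cubic fscale_add_pi12_taylor2_cubic image_iff)
  moreover have "k1 = 0 \<and> k2 = 0"
    if "fscale k1 (?T (cubic A1 B1 C1 D1)) + fscale k2 (?T (cubic A2 B2 C2 D2)) = 0" for k1 k2
  proof (rule scaleR_add_eq_0_if_wedge3_nonzero[OF assms])
    show "k1 *\<^sub>R half_hessian A1 B1 C1 D1 \<xi> + k2 *\<^sub>R half_hessian A2 B2 C2 D2 \<xi> = 0"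
      unfolding half_hessian_add[symmetric]
      by (rule half_hessian_eq_0_if_pi12_taylor2_eq_0)
        (use that in \<open>simp add: fscale_add_pi12_taylor2_cubic\<close>)
  qed
  ultimately show ?thesis by (metis fv.dim_span_pair)
qed

lemma negligible_line:
  assumes "p \<noteq> 0 \<or> q \<noteq> 0"
  shows "negligible {x::real \<times> real. p * fst x + q * snd x = 0}"
proof -
  have "negligible {x::real \<times> real. (p,q) \<bullet> x = 0}"
    by (rule negligible_hyperplane) (use assms in \<open>auto simp: zero_prod_def\<close>)
  then show ?thesis by (simp add: inner_prod_def)
qed

lemma negligible_binary_quadratic_zeros:
  assumes "\<alpha> \<noteq> 0 \<or> \<beta> \<noteq> 0 \<or> \<gamma> \<noteq> 0"
  shows "negligible {x::real \<times> real. \<alpha> * (fst x)^2 + \<beta> * fst x * snd x + \<gamma> * (snd x)^2 = 0}"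
    (is "negligible ?Z")
proof (cases "\<alpha> = 0")
  case True
  have "?Z \<subseteq> {x. 0 * fst x + 1 * snd x = 0} \<union> {x. \<beta> * fst x + \<gamma> * snd x = 0}"
  proof
    fix x :: "real \<times> real"
    assume "x \<in> ?Z"
    with True have "snd x * (\<beta> * fst x + \<gamma> * snd x) = 0"
      by (simp add: power2_eq_square algebra_simps)
    then show "x \<in> {x. 0 * fst x + 1 * snd x = 0} \<union> {x. \<beta> * fst x + \<gamma> * snd x = 0}"
      by auto
  qed
  moreover have "negligible ({x::real \<times> real. 0 * fst x + 1 * snd x = 0} \<union> {x. \<beta> * fst x + \<gamma> * snd x = 0})"
    using assms True by (intro negligible_Un negligible_line) auto
  ultimately show ?thesis using negligible_subset by blast
next
  case False
  \<comment> \<open>off the origin, the zero set lies on the lines r = t s through the roots t of \<alpha>t^2 + \<beta>t + \<gamma>\<close>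
  define R where "R = {t. poly [:\<gamma>, \<beta>, \<alpha>:] t = 0}"
  have "finite R" unfolding R_def by (rule poly_roots_finite) (use False in auto)
  have "?Z \<subseteq> {(0,0)} \<union> (\<Union>t\<in>R. {x. 1 * fst x + (-t) * snd x = 0})"
  proof
    fix x :: "real \<times> real"
    assume x: "x \<in> ?Z"
    obtain a b where x_eq: "x = (a,b)" by (cases x)
    show "x \<in> {(0,0)} \<union> (\<Union>t\<in>R. {x. 1 * fst x + (-t) * snd x = 0})"
    proof (cases "b = 0")
      case True
      then show ?thesis using x x_eq False by simp
    next
      case False
      have "poly [:\<gamma>, \<beta>, \<alpha>:] (a/b) = (\<alpha> * a^2 + \<beta> * a * b + \<gamma> * b^2) / b^2"
        using False by (simp add: field_simps power2_eq_square)
      with x x_eq have "a/b \<in> R" by (simp add: R_def)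
      with False x_eq show ?thesis by (intro UnI2 UN_I[of "a/b"]) auto
    qed
  qed
  moreover have "negligible {x::real \<times> real. 1 * fst x + (-t) * snd x = 0}" for t
    by (rule negligible_line) simp
  then have "negligible ({(0::real,0::real)} \<union> (\<Union>t\<in>R. {x. 1 * fst x + (-t) * snd x = 0}))"
    using \<open>finite R\<close> by (intro negligible_Un negligible_Union) auto
  ultimately show ?thesis using negligible_subset by blast
qed

lemma negligible_parallel_half_hessians:
  fixes A1 B1 C1 D1 A2 B2 C2 D2 :: real
  defines "pAB \<equiv> A1*B2 - A2*B1" and "pAC \<equiv> A1*C2 - A2*C1" and "pAD \<equiv> A1*D2 - A2*D1"
    and "pBC \<equiv> B1*C2 - B2*C1" and "pBD \<equiv> B1*D2 - B2*D1" and "pCD \<equiv> C1*D2 - C2*D1"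
  assumes "pAB \<noteq> 0 \<or> pAC \<noteq> 0 \<or> pAD \<noteq> 0 \<or> pBC \<noteq> 0 \<or> pBD \<noteq> 0 \<or> pCD \<noteq> 0"
  shows "negligible {\<xi>. wedge3 (half_hessian A1 B1 C1 D1 \<xi>) (half_hessian A2 B2 C2 D2 \<xi>) = 0}"
proof -
  define q1 q2 q3 :: "real \<times> real \<Rightarrow> real" where
    "q1 \<xi> = 3*pAB * (fst \<xi>)^2 + 3*pAC * fst \<xi> * snd \<xi> + pBC * (snd \<xi>)^2" and
    "q2 \<xi> = 3*pAC * (fst \<xi>)^2 + (9*pAD + pBC) * fst \<xi> * snd \<xi> + 3*pBD * (snd \<xi>)^2" and
    "q3 \<xi> = pBC * (fst \<xi>)^2 + 3*pBD * fst \<xi> * snd \<xi> + 3*pCD * (snd \<xi>)^2" for \<xi>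
  have wedge: "wedge3 (half_hessian A1 B1 C1 D1 \<xi>) (half_hessian A2 B2 C2 D2 \<xi>) = (q1 \<xi>, q2 \<xi>, q3 \<xi>)"
    for \<xi>
    by (cases \<xi>) (simp add: q1_def q2_def q3_def pAB_def pAC_def pAD_def pBC_def pBD_def pCD_def
        half_hessian_def algebra_simps power2_eq_square)
  consider "3*pAB \<noteq> 0 \<or> 3*pAC \<noteq> 0 \<or> pBC \<noteq> 0"
    | "3*pAC \<noteq> 0 \<or> 9*pAD + pBC \<noteq> 0 \<or> 3*pBD \<noteq> 0"
    | "pBC \<noteq> 0 \<or> 3*pBD \<noteq> 0 \<or> 3*pCD \<noteq> 0"
    using assms by (cases "pBC = 0") auto
  then show ?thesis
  proof cases
    case 1
    then have "negligible {\<xi>. q1 \<xi> = 0}" unfolding q1_def by (rule negligible_binary_quadratic_zeros)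
    then show ?thesis by (rule negligible_subset) (auto simp: wedge zero_prod_def)
  next
    case 2
    then have "negligible {\<xi>. q2 \<xi> = 0}" unfolding q2_def by (rule negligible_binary_quadratic_zeros)
    then show ?thesis by (rule negligible_subset) (auto simp: wedge zero_prod_def)
  next
    case 3
    then have "negligible {\<xi>. q3 \<xi> = 0}" unfolding q3_def by (rule negligible_binary_quadratic_zeros)
    then show ?thesis by (rule negligible_subset) (auto simp: wedge zero_prod_def)
  qed
qed

lemma dependent_if_plucker_eq_0:
  fixes A1 B1 C1 D1 A2 B2 C2 D2 :: real
  assumes "A1*B2 - A2*B1 = 0" "A1*C2 - A2*C1 = 0" "A1*D2 - A2*D1 = 0"
    "B1*C2 - B2*C1 = 0" "B1*D2 - B2*D1 = 0" "C1*D2 - C2*D1 = 0"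
  obtains c1 c2 where "c1 \<noteq> 0 \<or> c2 \<noteq> 0"
    "c1*A1 + c2*A2 = 0" "c1*B1 + c2*B2 = 0" "c1*C1 + c2*C2 = 0" "c1*D1 + c2*D2 = 0"
proof -
  consider "A1 \<noteq> 0" | "B1 \<noteq> 0" | "C1 \<noteq> 0" | "D1 \<noteq> 0" | "A1 = 0" "B1 = 0" "C1 = 0" "D1 = 0"
    by blast
  then show ?thesis
  proof cases
    case 1 show ?thesis using assms 1 by (intro that[of A2 "-A1"]) (auto simp: algebra_simps)
  next
    case 2 show ?thesis using assms 2 by (intro that[of B2 "-B1"]) (auto simp: algebra_simps)
  next
    case 3 show ?thesis using assms 3 by (intro that[of C2 "-C1"]) (auto simp: algebra_simps)
  next
    case 4 show ?thesis using assms 4 by (intro that[of D2 "-D1"]) (auto simp: algebra_simps)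
  next
    case 5 show ?thesis using 5 by (intro that[of 1 0]) auto
  qed
qed

lemma plucker_nonzero_if_cubics_independent:
  assumes "\<forall>c1 c2. (\<forall>x. c1 * cubic A1 B1 C1 D1 x + c2 * cubic A2 B2 C2 D2 x = 0) \<longrightarrow> c1 = 0 \<and> c2 = 0"
  shows "A1*B2 - A2*B1 \<noteq> 0 \<or> A1*C2 - A2*C1 \<noteq> 0 \<or> A1*D2 - A2*D1 \<noteq> 0 \<or>
         B1*C2 - B2*C1 \<noteq> 0 \<or> B1*D2 - B2*D1 \<noteq> 0 \<or> C1*D2 - C2*D1 \<noteq> 0"
proof (rule ccontr)
  assume "\<not> ?thesis"
  then have "A1*B2 - A2*B1 = 0" "A1*C2 - A2*C1 = 0" "A1*D2 - A2*D1 = 0"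
    "B1*C2 - B2*C1 = 0" "B1*D2 - B2*D1 = 0" "C1*D2 - C2*D1 = 0"
    by simp_all
  then obtain c1 c2 where c: "c1 \<noteq> 0 \<or> c2 \<noteq> 0" "c1*A1 + c2*A2 = 0" "c1*B1 + c2*B2 = 0"
      "c1*C1 + c2*C2 = 0" "c1*D1 + c2*D2 = 0"
    by (rule dependent_if_plucker_eq_0)
  have "c1 * cubic A1 B1 C1 D1 x + c2 * cubic A2 B2 C2 D2 x = 0" for x
  proof -
    have "c1 * cubic A1 B1 C1 D1 x + c2 * cubic A2 B2 C2 D2 x
        = cubic (c1*A1 + c2*A2) (c1*B1 + c2*B2) (c1*C1 + c2*C2) (c1*D1 + c2*D2) x"
      using fun_cong[OF fscale_add_cubic] by (simp add: fscale_def)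
    also have "\<dots> = 0"
      using c(2-) by (simp add: cubic_def case_prod_beta)
    finally show ?thesis .
  qed
  with assms c(1) show False by blast
qed

theorem lemma7p2:
  fixes f1 f2 :: rfun
  assumes "f1 \<in> S3" and "f2 \<in> S3"
    and "\<forall>c1 c2. (\<forall>x. c1 * f1 x + c2 * f2 x = 0) \<longrightarrow> c1 = 0 \<and> c2 = 0"
  shows "AE xi in lborel.
           vector_space.dim fscale
             ((\<lambda>f. pi12 (taylor2 xi f)) ` module.span fscale {f1, f2}) = 2"
proof -
  obtain A1 B1 C1 D1 A2 B2 C2 D2 where
    f1: "f1 = cubic A1 B1 C1 D1" and f2: "f2 = cubic A2 B2 C2 D2"
    using assms(1,2) by (auto simp: S3_eq_cubics)
  define N where
    "N = {\<xi>. wedge3 (half_hessian A1 B1 C1 D1 \<xi>) (half_hessian A2 B2 C2 D2 \<xi>) = 0}"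
  have "negligible N"
    unfolding N_def
    by (intro negligible_parallel_half_hessians plucker_nonzero_if_cubics_independent)
      (use assms(3) in \<open>unfold f1 f2\<close>)
  then have "N \<in> null_sets lebesgue"
    by (simp add: negligible_iff_null_sets)
  moreover have "fv.dim ((\<lambda>f. pi12 (taylor2 \<xi> f)) ` fv.span {f1, f2}) = 2" if "\<xi> \<notin> N" for \<xi>
    using dim_image_span_cubics that by (simp add: N_def f1 f2)
  ultimately have "AE xi in lebesgue. fv.dim ((\<lambda>f. pi12 (taylor2 xi f)) ` fv.span {f1, f2}) = 2"
    by (blast intro: AE_I')
  then show ?thesis by (simp add: AE_completion_iff)
qed

end
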